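(* Let $K$ be a non-pluripolar compact subset of $\mathbb{C}^n$. Then for every index $i\ge 0$, $$\inf\{\|P\|_K : P\in\mathcal P(\alpha(i))\} \;\ge\; [\tau^{-}(K)]^{|\alpha(i)|}.$$ In particular, every unweighted Chebyshev polynomial $T$ for $K$ in $\mathcal P(\alpha(i))$, i.e. every minimizer of $\|P\|_K$ over $P\in\mathcal P(\alpha(i))$, satisfies $\|T\|_K\ge[\tau^{-}(K)]^{|\alpha(i)|}$.
   Context: Monomials $z^\alpha=z_1^{\alpha_1}\cdots z_n^{\alpha_n}$, $\alpha\in\mathbb N_0^n$, are enumerated as $e_0=1,e_1,e_2,\dots$ with $e_i=z^{\alpha(i)}$. The enumeration is such that $|\alpha(i)|=\alpha_1+\dots+\alpha_n$ is non-decreasing in $i$. Among multi-indices of equal length it is ordered lexicographically: for $|\alpha|=|\beta|$, $\beta\prec\alpha$ iff for some $l$ one has $\alpha_l<\beta_l$ and $\alpha_k=\beta_k$ for all $k<l$. $\mathcal P(\alpha(i))$ denotes the set of polynomials of the form $e_i+\sum_{j<i}c_je_j$ with $c_j\in\mathbb C$. For compact $K\subset\mathbb C^n$, $\|\cdot\|_K$ denotes the sup norm on $K$. Set $t_i(K)=\inf\{\|P\|_K:P\in\mathcal P(\alpha(i))\}$ and $\tau^-(K)=\liminf_{i\to\infty} t_i(K)^{1/|\alpha(i)|}$. A compact set is non-pluripolar if it is not contained in the $-\infty$ locus of a plurisubharmonic function that is not identically $-\infty$ on a connected open neighborhood. *)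

theory Defs
  imports "HOL-Analysis.Analysis" "HOL-Library.Extended_Nonnegative_Real"
begin

text \<open>Points of C^n are elements of complex^'n; the coordinates are indexed by a
finite linearly ordered type 'n (the order of the coordinates z_1,...,z_n).
Multi-indices are functions 'n => nat.\<close>

definition mdeg :: "('n::finite \<Rightarrow> nat) \<Rightarrow> nat" where
  "mdeg a = (\<Sum>k\<in>UNIV. a k)"

definition grlex_less :: "('n::{finite,linorder} \<Rightarrow> nat) \<Rightarrow> ('n \<Rightarrow> nat) \<Rightarrow> bool" where
  "grlex_less b a \<longleftrightarrow> mdeg b < mdeg a \<or>
     (mdeg b = mdeg a \<and> (\<exists>l. a l < b l \<and> (\<forall>k<l. a k = b k)))"

definition mindex :: "nat \<Rightarrow> ('n::{finite,linorder} \<Rightarrow> nat)" where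
  "mindex i = (THE a. card {b. grlex_less b a} = i)"

definition monomial :: "('n::finite \<Rightarrow> nat) \<Rightarrow> complex^'n \<Rightarrow> complex" where
  "monomial a z = (\<Prod>k\<in>UNIV. (z $ k) ^ (a k))"

definition monic_class :: "nat \<Rightarrow> (complex^'n::{finite,linorder} \<Rightarrow> complex) set" where
  "monic_class i = {p. \<exists>c::nat \<Rightarrow> complex.
      p = (\<lambda>z. monomial (mindex i) z + (\<Sum>j<i. c j * monomial (mindex j) z))}"

definition supnorm :: "'a set \<Rightarrow> ('a \<Rightarrow> complex) \<Rightarrow> real" where
  "supnorm K p = Sup ((\<lambda>z. cmod (p z)) ` K)"

definition cheb_const :: "(complex^'n::{finite,linorder}) set \<Rightarrow> nat \<Rightarrow> real" where
  "cheb_const K i = Inf (supnorm K ` monic_class i)"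

definition tau_minus :: "(complex^'n::{finite,linorder}) set \<Rightarrow> ereal" where
  "tau_minus K = liminf (\<lambda>i. ereal (cheb_const K i powr (1 / real (mdeg (mindex i :: 'n \<Rightarrow> nat)))))"

definition circle_mean :: "('a \<Rightarrow> ereal) \<Rightarrow> (real \<Rightarrow> 'a) \<Rightarrow> ereal" where
  "circle_mean f \<gamma> =
     (enn2ereal (\<integral>\<^sup>+\<theta>\<in>{0..2*pi}. e2ennreal (f (\<gamma> \<theta>)) \<partial>lborel)
      - enn2ereal (\<integral>\<^sup>+\<theta>\<in>{0..2*pi}. e2ennreal (- f (\<gamma> \<theta>)) \<partial>lborel)) / ereal (2*pi)"

text \<open>u : Omega -> [-inf, inf) is plurisubharmonic on the open set Omega: upper
semicontinuous, and its restriction to every complex line is subharmonic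
(sub-mean-value property on every closed disc contained in Omega).\<close>
definition psh_on :: "(complex^'n \<Rightarrow> ereal) \<Rightarrow> (complex^'n) set \<Rightarrow> bool" where
  "psh_on u \<Omega> \<longleftrightarrow> open \<Omega> \<and> (\<forall>x\<in>\<Omega>. u x \<noteq> \<infinity>) \<and>
     (\<forall>x\<in>\<Omega>. \<forall>c. u x < c \<longrightarrow> (\<forall>\<^sub>F y in at x. u y < c)) \<and>
     (\<forall>a\<in>\<Omega>. \<forall>b. (\<forall>\<zeta>. cmod \<zeta> \<le> 1 \<longrightarrow> a + \<zeta> *s b \<in> \<Omega>) \<longrightarrow>
          u a \<le> circle_mean u (\<lambda>\<theta>. a + cis \<theta> *s b))"

definition pluripolar :: "(complex^'n) set \<Rightarrow> bool" where
  "pluripolar E \<longleftrightarrow> (\<exists>\<Omega> u. open \<Omega> \<and> connected \<Omega> \<and> E \<subseteq> \<Omega> \<and> psh_on u \<Omega> \<and>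
      (\<exists>x\<in>\<Omega>. u x \<noteq> -\<infinity>) \<and> (\<forall>z\<in>E. u z = -\<infinity>))"

end

(* If P lies in P(alpha), then for every m >= 1 the power P^m lies in P(m alpha): the
   graded lexicographic order is invariant under translation, so multiplying polynomials
   adds their leading multi-indices and keeps all other monomials below. Hence the
   Chebyshev constant of index m alpha is at most ||P||_K^m, so along the subsequence of
   indices of the m alpha the normalized roots t^(1/|m alpha|) stay below
   ||P||_K^(1/|alpha|), and therefore tau^-(K) <= ||P||_K^(1/|alpha|). Non-pluripolarity
   of K is only needed to make K nonempty. *)

theory Submission
  imports Defs
begin

lemma mdeg_add: "mdeg (\<lambda>k. a k + b k) = mdeg a + mdeg b"
  by (simp add: mdeg_def sum.distrib)

lemma mdeg_mult: "mdeg (\<lambda>k. c * a k) = c * mdeg a"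
  by (simp add: mdeg_def sum_distrib_left)

lemma component_le_mdeg: "a k \<le> mdeg a"
  unfolding mdeg_def by (rule member_le_sum) auto

lemma mdeg_eq_0_iff: "mdeg a = 0 \<longleftrightarrow> a = (\<lambda>_. 0)"
  by (auto simp: mdeg_def fun_eq_iff)

lemma mdeg_le_of_grlex_less: "grlex_less b a \<Longrightarrow> mdeg b \<le> mdeg a"
  unfolding grlex_less_def by auto

lemma grlex_less_irrefl: "\<not> grlex_less a a"
  by (auto simp: grlex_less_def)

lemma grlex_less_trans:
  assumes cb: "grlex_less c b" and ba: "grlex_less b a"
  shows "grlex_less c a"
proof (cases "mdeg c = mdeg b \<and> mdeg b = mdeg a")
  case False
  with mdeg_le_of_grlex_less[OF cb] mdeg_le_of_grlex_less[OF ba] have "mdeg c < mdeg a"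
    by linarith
  then show ?thesis unfolding grlex_less_def by blast
next
  case True
  from ba True obtain l1 where l1: "a l1 < b l1" "\<forall>k<l1. a k = b k"
    unfolding grlex_less_def by auto
  from cb True obtain l2 where l2: "b l2 < c l2" "\<forall>k<l2. b k = c k"
    unfolding grlex_less_def by auto
  have "a (min l1 l2) < c (min l1 l2) \<and> (\<forall>k<min l1 l2. a k = c k)"
    using l1 l2 by (cases l1 l2 rule: linorder_cases) (auto simp: min_def)
  moreover have "mdeg c = mdeg a" using True by simp
  ultimately show ?thesis unfolding grlex_less_def by blast
qed

lemma grlex_less_linear: "grlex_less a b \<or> a = b \<or> grlex_less b a"
proof (cases "mdeg a = mdeg b \<and> a \<noteq> b")
  case True
  define D where "D = {k. a k \<noteq> b k}"
  define l where "l = Min D"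
  have "finite D" by (rule finite)
  moreover have "D \<noteq> {}" using True by (auto simp: D_def fun_eq_iff)
  ultimately have "l \<in> D" unfolding l_def by (rule Min_in)
  have agree: "\<forall>k<l. a k = b k"
  proof (intro allI impI, rule ccontr)
    fix k assume "k < l" "a k \<noteq> b k"
    then have "k \<in> D" by (simp add: D_def)
    then have "l \<le> k" unfolding l_def by (rule Min_le[OF \<open>finite D\<close>])
    with \<open>k < l\<close> show False by simp
  qed
  from \<open>l \<in> D\<close> have "a l < b l \<or> b l < a l" by (auto simp: D_def)
  moreover have "mdeg a = mdeg b" using True by simp
  ultimately have "grlex_less b a \<or> grlex_less a b"
    using agree unfolding grlex_less_def by (metis (full_types))
  then show ?thesis by blast
next
  case False
  then consider "a = b" | "mdeg a < mdeg b" | "mdeg b < mdeg a" by linarith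
  then show ?thesis by cases (simp_all add: grlex_less_def)
qed

lemma grlex_less_add_right:
  "grlex_less b a \<Longrightarrow> grlex_less (\<lambda>k. b k + c k) (\<lambda>k. a k + c k)"
  unfolding grlex_less_def mdeg_add by auto

lemma grlex_less_add_left:
  "grlex_less b a \<Longrightarrow> grlex_less (\<lambda>k. c k + b k) (\<lambda>k. c k + a k)"
  using grlex_less_add_right[of b a c] by (simp add: add.commute)

lemma grlex_less_of_mdeg_less: "mdeg b < mdeg a \<Longrightarrow> grlex_less b a"
  by (simp add: grlex_less_def)

definition grlex_below :: "('n::{finite,linorder} \<Rightarrow> nat) \<Rightarrow> ('n \<Rightarrow> nat) set" where
  "grlex_below a = {b. grlex_less b a}"

lemma mem_grlex_below [simp]: "b \<in> grlex_below a \<longleftrightarrow> grlex_less b a"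
  by (simp add: grlex_below_def)

lemma grlex_below_zero [simp]: "grlex_below (\<lambda>_. 0) = {}"
proof (rule equals0I)
  fix b assume "b \<in> grlex_below (\<lambda>_. 0)"
  then have below: "grlex_less b (\<lambda>_. 0)" by simp
  then have "b = (\<lambda>_. 0)"
    using mdeg_le_of_grlex_less mdeg_eq_0_iff by (fastforce simp: mdeg_def)
  with below grlex_less_irrefl show False by metis
qed

lemma finite_grlex_below [simp]: "finite (grlex_below a)"
proof (rule finite_subset)
  show "grlex_below a \<subseteq> (\<Pi>\<^sub>E k\<in>UNIV. {..mdeg a})"
    using mdeg_le_of_grlex_less component_le_mdeg order_trans by fastforce
qed (simp add: finite_PiE)

definition grlex_rank :: "('n::{finite,linorder} \<Rightarrow> nat) \<Rightarrow> nat" where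
  "grlex_rank a = card (grlex_below a)"

lemma grlex_rank_strict_mono:
  assumes "grlex_less b a"
  shows "grlex_rank b < grlex_rank a"
proof -
  have "grlex_below b \<subseteq> grlex_below a"
    using assms grlex_less_trans by auto
  moreover have "b \<in> grlex_below a - grlex_below b"
    using assms grlex_less_irrefl by simp
  ultimately have "grlex_below b \<subset> grlex_below a" by blast
  then show ?thesis
    unfolding grlex_rank_def by (simp add: psubset_card_mono)
qed

lemma inj_grlex_rank: "inj grlex_rank"
  by (metis grlex_less_linear grlex_rank_strict_mono injI less_irrefl)

lemma grlex_rank_image_below: "grlex_rank ` grlex_below a = {..<grlex_rank a}"
proof (rule card_subset_eq)
  show "grlex_rank ` grlex_below a \<subseteq> {..<grlex_rank a}"
    using grlex_rank_strict_mono by auto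
  show "card (grlex_rank ` grlex_below a) = card {..<grlex_rank a}"
    using card_image[OF inj_on_subset[OF inj_grlex_rank]] by (simp add: grlex_rank_def)
qed simp

text \<open>The constant multi-indices have strictly increasing degrees, so their ranks
are unbounded; as the ranks below any multi-index form an initial segment, every
natural number is a rank.\<close>

lemma grlex_rank_surj: "\<exists>a::'n::{finite,linorder} \<Rightarrow> nat. grlex_rank a = i"
proof -
  define r where "r m = grlex_rank (\<lambda>_::'n. m)" for m
  have "strict_mono r"
  proof (rule strict_monoI_Suc)
    fix m
    have "mdeg (\<lambda>_::'n. m) < mdeg (\<lambda>_::'n. Suc m)"
      by (simp add: mdeg_def)
    then show "r m < r (Suc m)"
      unfolding r_def by (intro grlex_rank_strict_mono grlex_less_of_mdeg_less)
  qed
  then have "i < r (Suc i)"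
    using strict_mono_imp_increasing[of r "Suc i"] by simp
  then have "i \<in> grlex_rank ` grlex_below (\<lambda>_::'n. Suc i)"
    unfolding grlex_rank_image_below r_def by simp
  then show ?thesis by blast
qed

lemma grlex_rank_mindex [simp]: "grlex_rank (mindex i :: 'n::{finite,linorder} \<Rightarrow> nat) = i"
proof -
  have "\<exists>!a::'n \<Rightarrow> nat. grlex_rank a = i"
    using grlex_rank_surj inj_grlex_rank by (metis injD)
  then have "grlex_rank (THE a::'n \<Rightarrow> nat. grlex_rank a = i) = i"
    by (rule theI')
  then show ?thesis
    unfolding mindex_def grlex_rank_def grlex_below_def .
qed

lemma mindex_grlex_rank [simp]: "mindex (grlex_rank a) = a"
  using inj_grlex_rank grlex_rank_mindex by (metis injD)

lemma sum_grlex_below_reindex: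
  "(\<Sum>b\<in>grlex_below a. f b) = (\<Sum>j<grlex_rank a. f (mindex j))"
proof (rule sum.reindex_cong)
  show "grlex_below a = mindex ` {..<grlex_rank a}"
    by (simp flip: grlex_rank_image_below add: image_image)
  show "inj_on mindex {..<grlex_rank a}"
    by (metis grlex_rank_mindex inj_onI)
qed simp

definition lower_polys ::
    "('n::{finite,linorder} \<Rightarrow> nat) \<Rightarrow> (complex^'n::{finite,linorder} \<Rightarrow> complex) set" where
  "lower_polys a = {p. \<exists>c. p = (\<lambda>z. \<Sum>b\<in>grlex_below a. c b * monomial b z)}"

definition monic_polys ::
    "('n::{finite,linorder} \<Rightarrow> nat) \<Rightarrow> (complex^'n::{finite,linorder} \<Rightarrow> complex) set" where
  "monic_polys a = {p. \<exists>q\<in>lower_polys a. p = (\<lambda>z. monomial a z + q z)}"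

lemma monic_class_eq_monic_polys:
  fixes a :: "'n::{finite,linorder} \<Rightarrow> nat"
  shows "monic_class (grlex_rank a) = monic_polys a"
proof (intro set_eqI iffI)
  fix p :: "complex^'n::{finite,linorder} \<Rightarrow> complex"
  assume "p \<in> monic_class (grlex_rank a)"
  then obtain c where p: "p = (\<lambda>z. monomial a z + (\<Sum>j<grlex_rank a. c j * monomial (mindex j) z))"
    unfolding monic_class_def by auto
  define q :: "complex^'n::{finite,linorder} \<Rightarrow> complex"
    where "q z = (\<Sum>j<grlex_rank a. c j * monomial (mindex j) z)" for z
  have "q \<in> lower_polys a"
    unfolding lower_polys_def sum_grlex_below_reindex q_def
    by (auto intro!: exI[of _ "\<lambda>b. c (grlex_rank b)"])
  moreover have "p = (\<lambda>z. monomial a z + q z)"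
    unfolding p q_def ..
  ultimately show "p \<in> monic_polys a"
    unfolding monic_polys_def by blast
next
  fix p :: "complex^'n::{finite,linorder} \<Rightarrow> complex"
  assume "p \<in> monic_polys a"
  then obtain c where "p = (\<lambda>z. monomial a z + (\<Sum>b\<in>grlex_below a. c b * monomial b z))"
    unfolding monic_polys_def lower_polys_def by blast
  then show "p \<in> monic_class (grlex_rank a)"
    unfolding monic_class_def sum_grlex_below_reindex by auto
qed

lemma monomial_add: "monomial (\<lambda>k. a k + b k) z = monomial a z * monomial b z"
  unfolding monomial_def by (simp add: power_add prod.distrib)

lemma lower_polys_zero: "(\<lambda>_. 0) \<in> lower_polys a"
  unfolding lower_polys_def by (auto intro: exI[of _ "\<lambda>_. 0"])

lemma lower_polys_add:
  assumes "p \<in> lower_polys a" and "q \<in> lower_polys a"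
  shows "(\<lambda>z. p z + q z) \<in> lower_polys a"
proof -
  from assms obtain c d where "p = (\<lambda>z. \<Sum>b\<in>grlex_below a. c b * monomial b z)"
    and "q = (\<lambda>z. \<Sum>b\<in>grlex_below a. d b * monomial b z)"
    unfolding lower_polys_def by blast
  then have "(\<lambda>z. p z + q z) = (\<lambda>z. \<Sum>b\<in>grlex_below a. (c b + d b) * monomial b z)"
    by (simp add: distrib_right sum.distrib)
  then show ?thesis unfolding lower_polys_def by (intro CollectI exI)
qed

lemma lower_polys_sum:
  "(\<And>x. x \<in> F \<Longrightarrow> g x \<in> lower_polys a) \<Longrightarrow> (\<lambda>z. \<Sum>x\<in>F. g x z) \<in> lower_polys a"
  by (induction F rule: infinite_finite_induct) (simp_all add: lower_polys_zero lower_polys_add)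

lemma lower_polys_scale:
  assumes "p \<in> lower_polys a"
  shows "(\<lambda>z. k * p z) \<in> lower_polys a"
proof -
  from assms obtain c where "p = (\<lambda>z. \<Sum>b\<in>grlex_below a. c b * monomial b z)"
    unfolding lower_polys_def by blast
  then have "(\<lambda>z. k * p z) = (\<lambda>z. \<Sum>b\<in>grlex_below a. (k * c b) * monomial b z)"
    by (simp add: sum_distrib_left mult.assoc)
  then show ?thesis unfolding lower_polys_def by (intro CollectI exI)
qed

lemma monomial_in_lower_polys: "grlex_less b a \<Longrightarrow> monomial b \<in> lower_polys a"
  unfolding lower_polys_def
  by (auto intro!: exI[of _ "\<lambda>x. of_bool (x = b)"])

lemma lower_polys_mono: "grlex_less a b \<Longrightarrow> lower_polys a \<subseteq> lower_polys b"
  unfolding lower_polys_def [of a]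
  by (auto intro!: lower_polys_sum lower_polys_scale monomial_in_lower_polys
      intro: grlex_less_trans)

lemma monomial_mult_lower_polys:
  assumes "q \<in> lower_polys b"
  shows "(\<lambda>z. monomial a z * q z) \<in> lower_polys (\<lambda>k. a k + b k)"
proof -
  from assms obtain c where q: "q = (\<lambda>z. \<Sum>x\<in>grlex_below b. c x * monomial x z)"
    unfolding lower_polys_def by blast
  have "(\<lambda>z. \<Sum>x\<in>grlex_below b. c x * monomial (\<lambda>k. a k + x k) z) \<in> lower_polys (\<lambda>k. a k + b k)"
    by (intro lower_polys_sum lower_polys_scale monomial_in_lower_polys grlex_less_add_left) simp
  then show ?thesis
    unfolding q by (simp add: monomial_add sum_distrib_left mult.left_commute)
qed

lemma lower_polys_mult:
  assumes "q \<in> lower_polys a" and "r \<in> lower_polys b"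
  shows "(\<lambda>z. q z * r z) \<in> lower_polys (\<lambda>k. a k + b k)"
proof -
  from assms(1) obtain c where q: "q = (\<lambda>z. \<Sum>x\<in>grlex_below a. c x * monomial x z)"
    unfolding lower_polys_def by blast
  have "(\<lambda>z. monomial x z * r z) \<in> lower_polys (\<lambda>k. a k + b k)" if "grlex_less x a" for x
    using lower_polys_mono[OF grlex_less_add_right[OF that]] monomial_mult_lower_polys[OF assms(2)]
    by blast
  then have "(\<lambda>z. \<Sum>x\<in>grlex_below a. c x * (monomial x z * r z)) \<in> lower_polys (\<lambda>k. a k + b k)"
    by (intro lower_polys_sum lower_polys_scale) simp
  then show ?thesis
    unfolding q by (simp add: sum_distrib_right mult.assoc)
qed

lemma monic_polys_mult:
  assumes "p \<in> monic_polys a" and "p' \<in> monic_polys b"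
  shows "(\<lambda>z. p z * p' z) \<in> monic_polys (\<lambda>k. a k + b k)"
proof -
  from assms obtain q r where q: "q \<in> lower_polys a" "p = (\<lambda>z. monomial a z + q z)"
    and r: "r \<in> lower_polys b" "p' = (\<lambda>z. monomial b z + r z)"
    unfolding monic_polys_def by blast
  define s where "s z = monomial a z * r z + monomial b z * q z + q z * r z" for z
  have "(\<lambda>z. monomial a z * r z) \<in> lower_polys (\<lambda>k. a k + b k)"
    by (rule monomial_mult_lower_polys[OF r(1)])
  moreover have "(\<lambda>z. monomial b z * q z) \<in> lower_polys (\<lambda>k. a k + b k)"
    using monomial_mult_lower_polys[OF q(1), of b] by (simp add: add.commute)
  moreover have "(\<lambda>z. q z * r z) \<in> lower_polys (\<lambda>k. a k + b k)"
    by (rule lower_polys_mult[OF q(1) r(1)])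
  ultimately have "s \<in> lower_polys (\<lambda>k. a k + b k)"
    unfolding s_def by (intro lower_polys_add)
  moreover have "(\<lambda>z. p z * p' z) = (\<lambda>z. monomial (\<lambda>k. a k + b k) z + s z)"
    unfolding q r s_def monomial_add by (simp add: algebra_simps)
  ultimately show ?thesis unfolding monic_polys_def by blast
qed

lemma monic_polys_power:
  "p \<in> monic_polys a \<Longrightarrow> (\<lambda>z. p z ^ Suc m) \<in> monic_polys (\<lambda>k. Suc m * a k)"
proof (induction m)
  case (Suc m)
  from monic_polys_mult[OF Suc.IH[OF Suc.prems] Suc.prems] show ?case
    by (simp add: algebra_simps)
qed simp

lemma continuous_on_monic_class: "p \<in> monic_class i \<Longrightarrow> continuous_on K p"
  unfolding monic_class_def by (auto simp: monomial_def intro!: continuous_intros)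

lemma monomial_in_monic_class: "monomial (mindex i) \<in> monic_class i"
  unfolding monic_class_def by (auto intro: exI[of _ "\<lambda>_. 0"])

lemma monic_class_degree_zero:
  assumes "mdeg (mindex i :: 'n::{finite,linorder} \<Rightarrow> nat) = 0"
  shows "monic_class i = {(\<lambda>_. 1) :: complex^'n::{finite,linorder} \<Rightarrow> complex}"
proof -
  have "mindex i = (\<lambda>_::'n. 0)" using assms mdeg_eq_0_iff by blast
  then have "grlex_rank (mindex i :: 'n \<Rightarrow> nat) = 0" by (simp add: grlex_rank_def)
  then have "i = 0" by simp
  then show ?thesis using assms by (simp add: monic_class_def mdeg_eq_0_iff monomial_def)
qed

lemma bdd_above_norm_image:
  fixes p :: "'a::topological_space \<Rightarrow> complex"
  assumes "continuous_on K p" "compact K"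
  shows "bdd_above ((\<lambda>z. cmod (p z)) ` K)"
  using assms by (intro bounded_imp_bdd_above compact_imp_bounded compact_continuous_image)
    (auto intro: continuous_intros)

lemma norm_le_supnorm:
  fixes p :: "'a::topological_space \<Rightarrow> complex"
  assumes "continuous_on K p" "compact K" "z \<in> K"
  shows "cmod (p z) \<le> supnorm K p"
  unfolding supnorm_def using assms(3) bdd_above_norm_image[OF assms(1,2)] by (rule cSUP_upper)

lemma supnorm_nonneg:
  fixes p :: "'a::topological_space \<Rightarrow> complex"
  assumes "continuous_on K p" "compact K" "K \<noteq> {}"
  shows "0 \<le> supnorm K p"
  using assms norm_le_supnorm[OF assms(1,2)] by (meson all_not_in_conv norm_ge_zero order_trans)

lemma supnorm_power_le:
  fixes p :: "'a::topological_space \<Rightarrow> complex"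
  assumes "continuous_on K p" "compact K" "K \<noteq> {}"
  shows "supnorm K (\<lambda>z. p z ^ m) \<le> supnorm K p ^ m"
  unfolding supnorm_def[of K "\<lambda>z. p z ^ m"]
  using assms norm_le_supnorm[OF assms(1,2)]
  by (auto intro!: cSUP_least simp: norm_power power_mono)

lemma supnorm_const_one: "K \<noteq> {} \<Longrightarrow> supnorm K (\<lambda>_. 1) = 1"
  by (simp add: supnorm_def)

lemma cheb_const_le_supnorm:
  assumes "compact K" "K \<noteq> {}" "p \<in> monic_class i"
  shows "cheb_const K i \<le> supnorm K p"
  unfolding cheb_const_def
proof (rule cInf_lower)
  show "bdd_below (supnorm K ` monic_class i)"
    using supnorm_nonneg[OF continuous_on_monic_class assms(1,2)]
    by (auto intro!: bdd_belowI[of _ 0])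
qed (use assms(3) in blast)

lemma cheb_const_nonneg:
  assumes "compact K" "K \<noteq> {}"
  shows "0 \<le> cheb_const K i"
  unfolding cheb_const_def
  using supnorm_nonneg[OF continuous_on_monic_class assms] monomial_in_monic_class
  by (intro cINF_greatest) auto

lemma tau_minus_nonneg: "0 \<le> tau_minus K"
  unfolding tau_minus_def by (rule Liminf_bounded) simp

lemma powr_le_of_le_power:
  fixes c s :: real and n d :: nat
  assumes "0 \<le> c" "c \<le> s ^ n" "0 \<le> s" "n > 0"
  shows "c powr (1 / (n * d)) \<le> s powr (1 / d)"
proof -
  have "c powr (1 / (n * d)) \<le> (s ^ n) powr (1 / (n * d))"
    using assms by (intro powr_mono2) auto
  also have "\<dots> = s powr (1 / d)"
    using assms by (cases "s = 0") (auto simp: powr_realpow[symmetric] powr_powr)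
  finally show ?thesis .
qed

lemma tau_minus_le_root_supnorm:
  fixes K :: "(complex^'n::{finite,linorder}) set"
  assumes K: "compact K" "K \<noteq> {}" and P: "P \<in> monic_class i"
    and d: "mdeg (mindex i :: 'n \<Rightarrow> nat) > 0"
  shows "tau_minus K \<le> ereal (supnorm K P powr (1 / mdeg (mindex i :: 'n \<Rightarrow> nat)))"
proof -
  define a :: "'n \<Rightarrow> nat" where "a = mindex i"
  define r where "r m = grlex_rank (\<lambda>k. Suc m * a k)" for m
  define f where
    "f j = ereal (cheb_const K j powr (1 / real (mdeg (mindex j :: 'n \<Rightarrow> nat))))" for j
  have P_cont: "continuous_on K P"
    using continuous_on_monic_class[OF P] .
  have P_monic: "P \<in> monic_polys a"
    using P monic_class_eq_monic_polys[of a] by (simp add: a_def)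
  have "strict_mono r"
  proof (rule strict_monoI_Suc)
    fix m
    have "mdeg (\<lambda>k. Suc m * a k) < mdeg (\<lambda>k. Suc (Suc m) * a k)"
      using d unfolding mdeg_mult a_def by simp
    then show "r m < r (Suc m)"
      unfolding r_def by (intro grlex_rank_strict_mono grlex_less_of_mdeg_less)
  qed
  have "f (r m) \<le> ereal (supnorm K P powr (1 / mdeg a))" for m
  proof -
    have "(\<lambda>z. P z ^ Suc m) \<in> monic_class (r m)"
      unfolding r_def monic_class_eq_monic_polys by (rule monic_polys_power[OF P_monic])
    then have "cheb_const K (r m) \<le> supnorm K (\<lambda>z. P z ^ Suc m)"
      by (rule cheb_const_le_supnorm[OF K])
    also have "\<dots> \<le> supnorm K P ^ Suc m"
      by (rule supnorm_power_le[OF P_cont K])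
    finally have
      "cheb_const K (r m) powr (1 / (Suc m * mdeg a)) \<le> supnorm K P powr (1 / mdeg a)"
      using cheb_const_nonneg[OF K] supnorm_nonneg[OF P_cont K]
      by (intro powr_le_of_le_power) auto
    moreover have "mdeg (mindex (r m) :: 'n \<Rightarrow> nat) = Suc m * mdeg a"
      unfolding r_def mindex_grlex_rank mdeg_mult ..
    ultimately show ?thesis
      unfolding f_def by (simp only: ereal_less_eq)
  qed
  then have "liminf (f \<circ> r) \<le> ereal (supnorm K P powr (1 / mdeg a))"
    by (intro Liminf_le) auto
  moreover have "tau_minus K \<le> liminf (f \<circ> r)"
    unfolding tau_minus_def f_def[abs_def, symmetric] by (rule liminf_subseq_mono) fact
  ultimately show ?thesis by (simp add: a_def)
qed

lemma tau_minus_power_le_supnorm: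
  fixes K :: "(complex^'n::{finite,linorder}) set"
  assumes K: "compact K" "K \<noteq> {}" and P: "P \<in> monic_class i"
  shows "tau_minus K ^ mdeg (mindex i :: 'n \<Rightarrow> nat) \<le> ereal (supnorm K P)"
proof (cases "mdeg (mindex i :: 'n \<Rightarrow> nat) = 0")
  case True
  then have "P = (\<lambda>_. 1)"
    using P monic_class_degree_zero by blast
  with True show ?thesis
    using supnorm_const_one[OF K(2)] by simp
next
  case False
  define d where "d = mdeg (mindex i :: 'n \<Rightarrow> nat)"
  define s where "s = supnorm K P"
  have s: "0 \<le> s"
    unfolding s_def using continuous_on_monic_class[OF P] K by (rule supnorm_nonneg)
  obtain t where t: "tau_minus K = ereal t" "0 \<le> t" "t \<le> s powr (1 / d)"
    using tau_minus_le_root_supnorm[OF K P] tau_minus_nonneg[of K] False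
    by (cases "tau_minus K") (auto simp: d_def s_def)
  have "t ^ d \<le> (s powr (1 / d)) ^ d"
    using t by (intro power_mono) auto
  also have "\<dots> = s"
    using s False by (cases "s = 0") (auto simp: d_def powr_power)
  finally show ?thesis
    using t by (simp add: d_def s_def)
qed

lemma pluripolar_empty: "pluripolar {}"
  unfolding pluripolar_def
proof (intro exI[of _ UNIV] exI[of _ "\<lambda>_. 0"] conjI)
  show "psh_on (\<lambda>_. 0) UNIV"
    unfolding psh_on_def circle_mean_def by simp
qed auto

lemma tau_minus_power_le_cheb_const:
  fixes K :: "(complex^'n::{finite,linorder}) set"
  assumes K: "compact K" "K \<noteq> {}"
  shows "tau_minus K ^ mdeg (mindex i :: 'n \<Rightarrow> nat) \<le> ereal (cheb_const K i)"
proof -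
  let ?t = "tau_minus K ^ mdeg (mindex i :: 'n \<Rightarrow> nat)"
  have bound: "?t \<le> ereal (supnorm K P)" if "P \<in> monic_class i" for P
    using tau_minus_power_le_supnorm[OF K that] .
  obtain t where t: "?t = ereal t"
    using bound[OF monomial_in_monic_class] tau_minus_nonneg[of K]
    by (cases ?t) (auto simp: zero_le_power)
  have "t \<le> cheb_const K i"
    unfolding cheb_const_def using bound t monomial_in_monic_class
    by (intro cINF_greatest) auto
  then show ?thesis
    using t by simp
qed

theorem theorem2p1:
  fixes K :: "(complex^'n::{finite,linorder}) set" and i :: nat
  assumes "compact K" and "\<not> pluripolar K"
  shows "ereal (cheb_const K i) \<ge> tau_minus K ^ mdeg (mindex i :: 'n \<Rightarrow> nat)
     \<and> (\<forall>T\<in>monic_class i. (\<forall>P\<in>monic_class i. supnorm K T \<le> supnorm K P) \<longrightarrow>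
          ereal (supnorm K T) \<ge> tau_minus K ^ mdeg (mindex i :: 'n \<Rightarrow> nat))"
proof -
  have K: "compact K" "K \<noteq> {}"
    using assms pluripolar_empty by auto
  then show ?thesis
    using tau_minus_power_le_cheb_const tau_minus_power_le_supnorm by blast
qed

end
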